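(* Let $\theta=[a_1,a_2,\dots]$ be irrational with $a_1=a_2=a_3=1$, let $n\ge1$, and let $(x_k)_{k>0}$ be a finite or infinite sequence of real numbers (defined at least for $0<k\le q_n$) satisfying, for all indices $0<k<q_n$, the following: (1) $x_{q_j}<0$ if $j\equiv0,1\pmod4$ and $x_{q_j}>0$ otherwise; (2) if $k=\gamma q_j$ with $1<\gamma\le a_{j+1}$ then $x_{q_j}$ and $x_k$ have opposite signs; (3) if $k=\sum_{j\ge m}\gamma_jq_j$ is the Ostrowski representation of $k$ with lowest nonzero digit $\gamma_m$, then $x_k$ and $x_{\gamma_mq_m}$ have the same sign. Let $\mathrm{Neg}(m)$ be the number of $0<k<m$ with $x_k<0$. Then $\mathrm{Neg}(q_n)$ is even if $n\equiv0,1\pmod4$ and odd otherwise.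
   Context: $\theta=[a_1,a_2,\dots]=1/(a_1+1/(a_2+\cdots))$, $q_n$ the denominator of $[a_1,\dots,a_n]$, $q_n=a_nq_{n-1}+q_{n-2}$ (here $q_1=1,q_2=2$). Ostrowski representation: every positive integer $k$ is uniquely $k=\sum_{j\ge1}\gamma_jq_j$ with integers $0\le\gamma_j\le a_{j+1}$, finitely many nonzero, and $\gamma_j=a_{j+1}\Rightarrow\gamma_{j-1}=0$. *)

theory Defs
  imports Complex_Main
begin

text \<open>Continued fraction theta = [a_1, a_2, ...] is represented by its partial quotients
  a :: nat => nat (a 0 unused).  Denominators of the convergents:
  q_0 = 1, q_1 = a_1, q_n = a_n q_(n-1) + q_(n-2).\<close>

fun cf_q :: "(nat \<Rightarrow> nat) \<Rightarrow> nat \<Rightarrow> nat" where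
  "cf_q a 0 = 1"
| "cf_q a (Suc 0) = a 1"
| "cf_q a (Suc (Suc n)) = a (Suc (Suc n)) * cf_q a (Suc n) + cf_q a n"

text \<open>Ostrowski representation k = sum_{j>=1} g_j q_j with 0 <= g_j <= a_(j+1),
  finitely many nonzero, and g_j = a_(j+1) implies g_(j-1) = 0 (for j >= 2).
  Digits are indexed from 1; we require g 0 = 0.\<close>

definition ostrowski_rep :: "(nat \<Rightarrow> nat) \<Rightarrow> (nat \<Rightarrow> nat) \<Rightarrow> nat \<Rightarrow> bool" where
  "ostrowski_rep a g k \<longleftrightarrow>
     g 0 = 0 \<and>
     finite {j. g j \<noteq> 0} \<and>
     (\<forall>j. g j \<le> a (Suc j)) \<and>
     (\<forall>j\<ge>2. g j = a (Suc j) \<longrightarrow> g (j - 1) = 0) \<and>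
     k = (\<Sum>j\<in>{j. g j \<noteq> 0}. g j * cf_q a j)"

definition Neg :: "(nat \<Rightarrow> real) \<Rightarrow> nat \<Rightarrow> nat" where
  "Neg x m = card {k. 0 < k \<and> k < m \<and> x k < 0}"

end

theory Submission
  imports Defs
begin

(* Write q = q_m, q' = q_(m-1) and A = a_(m+1), so that q_(m+1) = A q + q'.  Every
  q < k < q_(m+1) that is not a multiple of q is c q + r with c >= 1 and 0 < r < q, and
  condition (3) gives x_(c q + r) the sign of x_r, because both numbers have the same
  lowest Ostrowski digit.  Counting block by block,
    Neg(q_(m+1)) = A Neg(q) + #{1 <= c <= A. x_(c q) < 0} + Neg(q'),
  and by (1) and (2) the middle count is 1 if x_q < 0 and A - 1 otherwise.  Inductively
  x_q < 0 exactly when Neg(q) is even, so in either case Neg(q_(m+1)) and Neg(q_(m-1))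
  have opposite parity; the period-4 pattern follows from Neg(q_0) = Neg(q_1) = 0. *)

lemma cf_q_pos:
  assumes "\<forall>j\<ge>1. a j \<ge> 1"
  shows "1 \<le> cf_q a n"
  using assms by (induction a n rule: cf_q.induct) (auto simp: trans_le_add2)

lemma cf_q_Suc:
  assumes "1 \<le> n"
  shows "cf_q a (Suc n) = a (Suc n) * cf_q a n + cf_q a (n - 1)"
  using assms by (cases n) auto

lemma cf_q_less_Suc:
  assumes "\<forall>j\<ge>1. a j \<ge> 1" "1 \<le> n"
  shows "cf_q a n < cf_q a (Suc n)"
proof -
  have "cf_q a n \<le> a (Suc n) * cf_q a n"
    using assms(1) by simp
  then show ?thesis
    using cf_q_Suc[OF assms(2), of a] cf_q_pos[OF assms(1), of "n - 1"] by linarith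
qed

lemma cf_q_mono:
  assumes "\<forall>j\<ge>1. a j \<ge> 1" "i \<le> j"
  shows "cf_q a i \<le> cf_q a j"
proof (rule lift_Suc_mono_le[OF _ assms(2)])
  show "cf_q a k \<le> cf_q a (Suc k)" for k
    using assms(1) cf_q_less_Suc[OF assms(1), of k] by (cases k) auto
qed

lemma cf_q_less:
  assumes "\<forall>j\<ge>1. a j \<ge> 1" "1 \<le> i" "i < j"
  shows "cf_q a i < cf_q a j"
  by (rule lift_Suc_mono_less_ivl[where N = "{1..}"])
    (use assms cf_q_less_Suc[OF assms(1)] in auto)

lemma ostrowski_sum_lessThan:
  assumes "\<forall>j\<ge>M. g j = 0"
  shows "(\<Sum>j\<in>{j. g j \<noteq> 0}. g j * cf_q a j) = (\<Sum>j<M. g j * cf_q a j)"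
  by (rule sum.mono_neutral_left) (use assms not_less in auto)

lemma ostrowski_rep_extend:
  assumes a_pos: "\<forall>j\<ge>1. a j \<ge> 1"
    and rep: "ostrowski_rep a g r" and supp: "\<forall>j\<ge>m. g j = 0" and "1 \<le> m"
    and c: "c \<le> a (Suc m)" and c_max: "c = a (Suc m) \<Longrightarrow> g (m - 1) = 0"
  shows "ostrowski_rep a (g(m := c)) (c * cf_q a m + r)"
proof -
  have supp': "\<forall>j\<ge>Suc m. (g(m := c)) j = 0"
    using supp by simp
  have "finite {j. (g(m := c)) j \<noteq> 0}"
    by (rule finite_subset[of _ "{..m}"]) (use supp' not_less_eq_eq in auto)
  moreover have "\<forall>j\<ge>2. (g(m := c)) j = a (Suc j) \<longrightarrow> (g(m := c)) (j - 1) = 0"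
  proof (intro allI impI)
    fix j assume "2 \<le> j" and j_max: "(g(m := c)) j = a (Suc j)"
    consider "j < m" | "j = m" | "m < j" by linarith
    then show "(g(m := c)) (j - 1) = 0"
    proof cases
      case 1
      then show ?thesis
        using rep \<open>2 \<le> j\<close> j_max unfolding ostrowski_rep_def by auto
    next
      case 2
      then show ?thesis
        using c_max j_max \<open>1 \<le> m\<close> by auto
    next
      case 3
      then have "(g(m := c)) j = 0"
        using supp by simp
      moreover have "1 \<le> a (Suc j)"
        using a_pos by simp
      ultimately show ?thesis
        using j_max by simp
    qed
  qed
  moreover have "(\<Sum>j\<in>{j. (g(m := c)) j \<noteq> 0}. (g(m := c)) j * cf_q a j) = c * cf_q a m + r"
  proof -
    have "(\<Sum>j\<in>{j. (g(m := c)) j \<noteq> 0}. (g(m := c)) j * cf_q a j)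
        = (\<Sum>j<Suc m. (g(m := c)) j * cf_q a j)"
      by (rule ostrowski_sum_lessThan[OF supp'])
    also have "\<dots> = (\<Sum>j<m. g j * cf_q a j) + c * cf_q a m"
      by simp
    also have "(\<Sum>j<m. g j * cf_q a j) = r"
      using rep ostrowski_sum_lessThan[OF supp] unfolding ostrowski_rep_def by simp
    finally show ?thesis by simp
  qed
  moreover have "(g(m := c)) 0 = 0" "\<forall>j. (g(m := c)) j \<le> a (Suc j)"
    using rep c \<open>1 \<le> m\<close> unfolding ostrowski_rep_def by auto
  ultimately show ?thesis
    unfolding ostrowski_rep_def by simp
qed

lemma ostrowski_rep_zero: "ostrowski_rep a (\<lambda>_. 0) 0"
  unfolding ostrowski_rep_def by simp

lemma ostrowski_rep_exists:
  assumes a_pos: "\<forall>j\<ge>1. a j \<ge> 1" and a1: "a 1 = 1" and "r < cf_q a n"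
  shows "\<exists>g. ostrowski_rep a g r \<and> (\<forall>j\<ge>n. g j = 0)"
  using assms(3)
proof (induction n arbitrary: r rule: less_induct)
  case (less n)
  show ?case
  proof (cases "n \<le> 1")
    case True
    then have "r = 0"
      using less.prems a1 by (auto simp: le_Suc_eq)
    then show ?thesis
      using ostrowski_rep_zero by blast
  next
    case False
    then obtain m where n: "n = Suc m" and "1 \<le> m"
      by (cases n) auto
    have q_m: "1 \<le> cf_q a m"
      using cf_q_pos[OF a_pos] .
    show ?thesis
    proof (cases "r < a (Suc m) * cf_q a m")
      case True
      obtain g where g: "ostrowski_rep a g (r mod cf_q a m)" "\<forall>j\<ge>m. g j = 0"
        using less.IH[of m "r mod cf_q a m"] n q_m by auto
      have "r div cf_q a m < a (Suc m)"
        using True q_m by (simp add: less_mult_imp_div_less)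
      then have "ostrowski_rep a (g(m := r div cf_q a m)) r"
        using ostrowski_rep_extend[OF a_pos g \<open>1 \<le> m\<close>, of "r div cf_q a m"]
        by (simp add: div_mult_mod_eq)
      then show ?thesis
        using g(2) n by auto
    next
      case False
      define r' where "r' = r - a (Suc m) * cf_q a m"
      have "r' < cf_q a (m - 1)"
        using False less.prems cf_q_Suc[OF \<open>1 \<le> m\<close>, of a] n unfolding r'_def by simp
      then obtain g where g: "ostrowski_rep a g r'" "\<forall>j\<ge>m - 1. g j = 0"
        using less.IH[of "m - 1" r'] n by fastforce
      then have "ostrowski_rep a (g(m := a (Suc m))) (a (Suc m) * cf_q a m + r')"
        using ostrowski_rep_extend[OF a_pos g(1) _ \<open>1 \<le> m\<close>] by simp
      then show ?thesis
        using False g(2) n unfolding r'_def by auto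
    qed
  qed
qed

lemma Neg_le_1: "m \<le> 1 \<Longrightarrow> Neg x m = 0"
  unfolding Neg_def by auto

lemma Neg_Suc: "Neg x (Suc m) = Neg x m + of_bool (0 < m \<and> x m < 0)"
proof (cases "0 < m \<and> x m < 0")
  case True
  then have "{k. 0 < k \<and> k < Suc m \<and> x k < 0} = insert m {k. 0 < k \<and> k < m \<and> x k < 0}"
    by (auto simp: less_Suc_eq)
  then show ?thesis
    unfolding Neg_def using True by simp
next
  case False
  then have "{k. 0 < k \<and> k < Suc m \<and> x k < 0} = {k. 0 < k \<and> k < m \<and> x k < 0}"
    by (auto simp: less_Suc_eq)
  then show ?thesis
    unfolding Neg_def using False by simp
qed

lemma Neg_add:
  assumes "0 < s" "1 \<le> L"
    and shift: "\<And>r. 0 < r \<Longrightarrow> r < L \<Longrightarrow> x (s + r) < 0 \<longleftrightarrow> x r < 0"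
  shows "Neg x (s + L) = Neg x s + of_bool (x s < 0) + Neg x L"
  using assms(2)
proof (induction L rule: dec_induct)
  case base
  show ?case
    using Neg_Suc[of x s] Neg_le_1[of 1 x] \<open>0 < s\<close> by simp
next
  case (step L)
  then show ?case
    using Neg_Suc[of x "s + L"] Neg_Suc[of x L] shift[of L] by simp
qed

lemma card_filter_atLeastLessThan_Suc:
  fixes i k :: nat
  assumes "i \<le> k"
  shows "card {j \<in> {i..<Suc k}. P j} = card {j \<in> {i..<k}. P j} + of_bool (P k)"
proof -
  have "{j \<in> {i..<Suc k}. P j} = (if P k then insert k else id) {j \<in> {i..<k}. P j}"
    using assms by (auto simp: less_Suc_eq)
  then show ?thesis
    by simp
qed

lemma Neg_mult:
  assumes "1 \<le> q" "1 \<le> c"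
    and shift: "\<And>i r. 1 \<le> i \<Longrightarrow> i < c \<Longrightarrow> 0 < r \<Longrightarrow> r < q \<Longrightarrow>
      x (i * q + r) < 0 \<longleftrightarrow> x r < 0"
  shows "Neg x (c * q) = c * Neg x q + card {i \<in> {1..<c}. x (i * q) < 0}"
  using assms(2)
proof (induction c rule: dec_induct)
  case base
  show ?case by simp
next
  case (step k)
  have "Neg x (Suc k * q) = Neg x (k * q + q)"
    by (simp add: add.commute)
  also have "\<dots> = Neg x (k * q) + of_bool (x (k * q) < 0) + Neg x q"
    using step.hyps \<open>1 \<le> q\<close> shift by (intro Neg_add) auto
  finally show ?case
    using step.IH card_filter_atLeastLessThan_Suc[OF step.hyps(1)] by simp
qed

lemma even_block_iff:
  fixes c N M :: nat
  assumes "1 \<le> c"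
  shows "even (c * N + (if even N then 1 else c - 1) + M) \<longleftrightarrow> odd M"
  using assms by (cases "even N") (auto elim!: evenE oddE simp: algebra_simps)

locale ostrowski_sign_pattern =
  fixes a :: "nat \<Rightarrow> nat" and x :: "nat \<Rightarrow> real" and n :: nat
  assumes a_pos: "\<forall>j\<ge>1. a j \<ge> 1"
    and a1: "a 1 = 1"
    and sign_cf_q: "\<forall>j\<ge>1. 0 < cf_q a j \<and> cf_q a j < cf_q a n \<longrightarrow>
      (if j mod 4 = 0 \<or> j mod 4 = 1 then x (cf_q a j) < 0 else x (cf_q a j) > 0)"
    and sign_multiple: "\<forall>j\<ge>1. \<forall>\<gamma>. 0 < \<gamma> * cf_q a j \<and> \<gamma> * cf_q a j < cf_q a n \<and>
      1 < \<gamma> \<and> \<gamma> \<le> a (Suc j) \<longrightarrow> sgn (x (\<gamma> * cf_q a j)) = - sgn (x (cf_q a j))"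
    and sign_lowest_digit: "\<forall>k g m. 0 < k \<and> k < cf_q a n \<and> ostrowski_rep a g k \<and>
      g m \<noteq> 0 \<and> (\<forall>j<m. g j = 0) \<longrightarrow> sgn (x k) = sgn (x (g m * cf_q a m))"
begin

lemma x_cf_q_sign:
  assumes "1 \<le> j" "j < n"
  shows "x (cf_q a j) < 0 \<longleftrightarrow> j mod 4 = 0 \<or> j mod 4 = 1"
    and "x (cf_q a j) \<noteq> 0"
  using sign_cf_q assms cf_q_less[OF a_pos assms] cf_q_pos[OF a_pos, of j]
  by (auto split: if_splits)

text \<open>\<open>i * cf_q a m + r\<close> and \<open>r\<close> share their lowest Ostrowski digit.\<close>

lemma sgn_block_shift:
  assumes "1 \<le> m" "Suc m \<le> n" "1 \<le> i" "0 < r" "r < cf_q a m"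
    and k_bound: "i * cf_q a m + r < cf_q a (Suc m)"
  shows "sgn (x (i * cf_q a m + r)) = sgn (x r)"
proof -
  have q_rec: "cf_q a (Suc m) = a (Suc m) * cf_q a m + cf_q a (m - 1)"
    using cf_q_Suc[OF \<open>1 \<le> m\<close>] .
  have "cf_q a (m - 1) \<le> cf_q a m"
    using cf_q_mono[OF a_pos] by simp
  have "i \<le> a (Suc m)"
  proof (rule ccontr)
    assume "\<not> i \<le> a (Suc m)"
    then have "Suc (a (Suc m)) * cf_q a m \<le> i * cf_q a m"
      by (intro mult_le_mono1) simp
    then show False
      using k_bound q_rec \<open>cf_q a (m - 1) \<le> cf_q a m\<close> by simp
  qed
  have r_max: "r < cf_q a (m - 1)" if "i = a (Suc m)"
    using k_bound q_rec that by simp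
  obtain g where g: "ostrowski_rep a g r" "\<forall>j\<ge>m. g j = 0" "i = a (Suc m) \<Longrightarrow> g (m - 1) = 0"
  proof (cases "i = a (Suc m)")
    case True
    then obtain g where "ostrowski_rep a g r" "\<forall>j\<ge>m - 1. g j = 0"
      using ostrowski_rep_exists[OF a_pos a1 r_max] by blast
    then show thesis
      using that by auto
  next
    case False
    then show thesis
      using that ostrowski_rep_exists[OF a_pos a1 \<open>r < cf_q a m\<close>] by blast
  qed
  have "\<exists>j. g j \<noteq> 0"
  proof (rule ccontr)
    assume "\<nexists>j. g j \<noteq> 0"
    then have "{j. g j \<noteq> 0} = {}"
      by simp
    then show False
      using g(1) \<open>0 < r\<close> unfolding ostrowski_rep_def by simp
  qed
  then obtain l where l: "g l \<noteq> 0" "\<forall>j<l. g j = 0"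
    using exists_least_iff[of "\<lambda>j. g j \<noteq> 0"] by blast
  have "l < m"
    using l(1) g(2) not_less by blast
  have "cf_q a (Suc m) \<le> cf_q a n"
    using cf_q_mono[OF a_pos \<open>Suc m \<le> n\<close>] .
  then have "i * cf_q a m + r < cf_q a n"
    using k_bound by linarith
  moreover have "ostrowski_rep a (g(m := i)) (i * cf_q a m + r)"
    using ostrowski_rep_extend[OF a_pos g(1,2) \<open>1 \<le> m\<close> \<open>i \<le> a (Suc m)\<close> g(3)] .
  ultimately have "sgn (x (i * cf_q a m + r)) = sgn (x (g l * cf_q a l))"
    using sign_lowest_digit[rule_format, of _ "g(m := i)" l] l \<open>l < m\<close> \<open>0 < r\<close> by simp
  also have "\<dots> = sgn (x r)"
    using sign_lowest_digit[rule_format, of r g l] l g(1) \<open>0 < r\<close> \<open>i * cf_q a m + r < cf_q a n\<close>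
    by simp
  finally show ?thesis .
qed

lemma Neg_cf_q_Suc:
  assumes "1 \<le> m" "Suc m \<le> n"
  shows "Neg x (cf_q a (Suc m)) = a (Suc m) * Neg x (cf_q a m)
    + (if x (cf_q a m) < 0 then 1 else a (Suc m) - 1) + Neg x (cf_q a (m - 1))"
proof -
  let ?A = "a (Suc m)" and ?q = "cf_q a m" and ?q' = "cf_q a (m - 1)"
  have q_rec: "cf_q a (Suc m) = ?A * ?q + ?q'"
    using cf_q_Suc[OF \<open>1 \<le> m\<close>] .
  have "1 \<le> ?A" "1 \<le> ?q" "1 \<le> ?q'" "?q' \<le> ?q"
    using a_pos cf_q_pos[OF a_pos] cf_q_mono[OF a_pos] by auto
  have shift: "x (i * ?q + r) < 0 \<longleftrightarrow> x r < 0"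
    if "1 \<le> i" "0 < r" "r < ?q" "i * ?q + r < cf_q a (Suc m)" for i r
    using sgn_block_shift[OF assms that] by (metis sgn_less)
  have split_last: "Neg x (cf_q a (Suc m)) = Neg x (?A * ?q) + of_bool (x (?A * ?q) < 0) + Neg x ?q'"
    unfolding q_rec
  proof (rule Neg_add)
    fix r assume "0 < r" "r < ?q'"
    then show "x (?A * ?q + r) < 0 \<longleftrightarrow> x r < 0"
      using shift[of ?A r] \<open>1 \<le> ?A\<close> \<open>?q' \<le> ?q\<close> q_rec by simp
  qed (use \<open>1 \<le> ?A\<close> \<open>1 \<le> ?q\<close> \<open>1 \<le> ?q'\<close> in simp_all)
  have split_blocks: "Neg x (?A * ?q) = ?A * Neg x ?q + card {i \<in> {1..<?A}. x (i * ?q) < 0}"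
  proof (rule Neg_mult[OF \<open>1 \<le> ?q\<close> \<open>1 \<le> ?A\<close>])
    fix i r assume "1 \<le> i" "i < ?A" "0 < r" "r < ?q"
    moreover have "Suc i * ?q \<le> ?A * ?q"
      using \<open>i < ?A\<close> by (intro mult_le_mono1) simp
    then have "i * ?q + r < ?A * ?q"
      using \<open>r < ?q\<close> by simp
    ultimately show "x (i * ?q + r) < 0 \<longleftrightarrow> x r < 0"
      using q_rec by (intro shift) auto
  qed
  have count: "card {i \<in> {1..<?A}. x (i * ?q) < 0} + of_bool (x (?A * ?q) < 0)
      = (if x ?q < 0 then 1 else ?A - 1)"
  proof -
    have flip: "x (i * ?q) < 0 \<longleftrightarrow> \<not> x ?q < 0" if "2 \<le> i" "i \<le> ?A" for i
    proof -
      have "i * ?q \<le> ?A * ?q"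
        using that by simp
      then have "i * ?q < cf_q a n"
        using \<open>1 \<le> ?q'\<close> q_rec cf_q_mono[OF a_pos \<open>Suc m \<le> n\<close>] by linarith
      then have "sgn (x (i * ?q)) = - sgn (x ?q)"
        using sign_multiple[rule_format, of m i] \<open>1 \<le> m\<close> \<open>1 \<le> ?q\<close> that by simp
      then show ?thesis
        using x_cf_q_sign(2)[OF \<open>1 \<le> m\<close>] \<open>Suc m \<le> n\<close> by (auto simp: sgn_if split: if_splits)
    qed
    have "{1..?A} = insert 1 {2..?A}"
      using \<open>1 \<le> ?A\<close> by auto
    then have negatives: "{i \<in> {1..?A}. x (i * ?q) < 0} = (if x ?q < 0 then {1} else {2..?A})"
      using flip by auto
    have "card {i \<in> {1..<?A}. x (i * ?q) < 0} + of_bool (x (?A * ?q) < 0)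
        = card {i \<in> {1..?A}. x (i * ?q) < 0}"
      using card_filter_atLeastLessThan_Suc[OF \<open>1 \<le> ?A\<close>]
      by (simp add: atLeastLessThanSuc_atLeastAtMost)
    also have "\<dots> = (if x ?q < 0 then 1 else ?A - 1)"
      unfolding negatives by simp
    finally show ?thesis .
  qed
  show ?thesis
    using split_last split_blocks count by simp
qed

lemma even_Neg_cf_q_iff:
  "m \<le> n \<Longrightarrow> even (Neg x (cf_q a m)) \<longleftrightarrow> m mod 4 = 0 \<or> m mod 4 = 1"
proof (induction m rule: less_induct)
  case (less m)
  show ?case
  proof (cases "m \<le> 1")
    case True
    then have "cf_q a m = 1"
      using a1 by (auto simp: le_Suc_eq)
    then show ?thesis
      using True Neg_le_1[of 1 x] by (auto simp: le_Suc_eq)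
  next
    case False
    define k where "k = m - 2"
    have m: "m = Suc (Suc k)"
      using False unfolding k_def by simp
    have sign: "x (cf_q a (Suc k)) < 0 \<longleftrightarrow> even (Neg x (cf_q a (Suc k)))"
      using x_cf_q_sign(1)[of "Suc k"] less.IH[of "Suc k"] less.prems m by simp
    have "Neg x (cf_q a m) = a m * Neg x (cf_q a (Suc k))
        + (if even (Neg x (cf_q a (Suc k))) then 1 else a m - 1) + Neg x (cf_q a k)"
      using Neg_cf_q_Suc[of "Suc k"] less.prems sign m by simp
    then have "even (Neg x (cf_q a m)) \<longleftrightarrow> odd (Neg x (cf_q a k))"
      using even_block_iff[of "a m"] a_pos m by simp
    also have "\<dots> \<longleftrightarrow> \<not> (k mod 4 = 0 \<or> k mod 4 = 1)"
      using less.IH[of k] less.prems m by simp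
    also have "\<dots> \<longleftrightarrow> m mod 4 = 0 \<or> m mod 4 = 1"
      unfolding m by presburger
    finally show ?thesis .
  qed
qed

end

theorem lemma2p5:
  fixes a :: "nat \<Rightarrow> nat" and x :: "nat \<Rightarrow> real" and n :: nat
  assumes a_pos: "\<forall>j\<ge>1. a j \<ge> 1"
    and a123: "a 1 = 1" "a 2 = 1" "a 3 = 1"
    and n_pos: "n \<ge> 1"
    and cond1: "\<forall>j\<ge>1. 0 < cf_q a j \<and> cf_q a j < cf_q a n \<longrightarrow>
                  (if j mod 4 = 0 \<or> j mod 4 = 1 then x (cf_q a j) < 0 else x (cf_q a j) > 0)"
    and cond2: "\<forall>j\<ge>1. \<forall>\<gamma>. 0 < \<gamma> * cf_q a j \<and> \<gamma> * cf_q a j < cf_q a n \<and>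
                  1 < \<gamma> \<and> \<gamma> \<le> a (Suc j) \<longrightarrow>
                  sgn (x (\<gamma> * cf_q a j)) = - sgn (x (cf_q a j))"
    and cond3: "\<forall>k g m. 0 < k \<and> k < cf_q a n \<and> ostrowski_rep a g k \<and> g m \<noteq> 0 \<and>
                  (\<forall>j<m. g j = 0) \<longrightarrow> sgn (x k) = sgn (x (g m * cf_q a m))"
  shows "even (Neg x (cf_q a n)) \<longleftrightarrow> (n mod 4 = 0 \<or> n mod 4 = 1)"
proof -
  interpret ostrowski_sign_pattern a x n
    using a_pos a123(1) cond1 cond2 cond3 by unfold_locales
  show ?thesis
    using even_Neg_cf_q_iff by simp
qed

end
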